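(* Let $(\alpha_k)_{k=0}^\infty$ be a strictly decreasing sequence of positive numbers, and let $g\in D(A^{\alpha_0})$ with $Q_ng\ne0$ for all $n$. (a) Set $\tilde\Gamma_{k,n}=\|Q_ng\|_{D(A^{\alpha_{k-1}})}$, $w_k=0$ and $\tilde w_{k,n}=-Q_ng/\tilde\Gamma_{k,n}$ for $k,n\ge1$. Then $P_ng\approx g+\sum_{k=1}^\infty\tilde\Gamma_{k,n}\cdot0$ is a degenerate expansion in the nested family $\mathcal Z=(D(A^{\alpha_k}))_{k=0}^\infty$ (with remainders $\tilde w_{k,n}$), and moreover $\|\tilde w_{k,n}\|_{D(A^{\alpha_{k-1}})}=1$ for all $k,n$. (b) Let $\beta=\inf_k\alpha_k$ and $s\in[0,\beta]$. Set $\Gamma_{k,n}=\|Q_ng\|_{D(A^{\alpha_k})}$ and $w_{k,n}=-Q_ng/\Gamma_{k,n}$. Then $P_ng\approx g+\sum_{k=1}^\infty\Gamma_{k,n}\cdot0$ is a degenerate expansion in $D(A^s)$ (with remainders $w_{k,n}$).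
   Context: $A$ is the Stokes operator (periodic or no-slip, three-dimensional) with eigenvalues $0<\lambda_1\le\lambda_2\le\cdots\to\infty$ and orthonormal eigenbasis $\{\varphi_j\}$ of the space $H$; $D(A^\alpha)=\{\sum c_j\varphi_j:\sum\lambda_j^{2\alpha}|c_j|^2<\infty\}$ with norm $\|u\|_{D(A^\alpha)}=(\sum\lambda_j^{2\alpha}|c_j|^2)^{1/2}$; $P_n$ is the orthogonal projection onto $\mathrm{span}\{\varphi_1,\ldots,\varphi_n\}$ and $Q_n=I-P_n$. Expansions: for nested normed spaces $Z_0\subset Z_1\subset\cdots$ with continuous embeddings, a degenerate expansion $v_n\approx v+\sum_{k=1}^\infty\Gamma_{k,n}w_k$ of a sequence $(v_n)\subset Z_0$ means: $v\in Z_0$, $w_k\in Z_k$, $w_{k,n}\in Z_{k-1}$, $\Gamma_{k,n}>0$ for all $n,k\ge1$ with $\Gamma_{1,n}\to0$, $\Gamma_{k+1,n}/\Gamma_{k,n}\to0$ and $\|w_{k,n}-w_k\|_{Z_k}\to0$ for each $k$, $v_n=v+\sum_{j=1}^{k-1}\Gamma_{j,n}w_j+\Gamma_{k,n}w_{k,n}$ for all $n,k$, and either $w_k=0$ for all $k$, or for some $N\ge1$, $\|w_k\|_{Z_k}=1$ for $k\le N$ and $w_k=0$ for $k>N$. "In a normed space $Z$" means $Z_k=Z$ for all $k$. *)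

theory Defs
  imports "HOL-Analysis.Analysis"
begin

text \<open>Abstract spectral setting of the Stokes operator: a real Hilbert space 'h with an
orthonormal basis phi (indexed from 0) of eigenvectors, with eigenvalues lam.\<close>

definition stokes_setting :: "(nat \<Rightarrow> real) \<Rightarrow> (nat \<Rightarrow> 'h::{real_inner,complete_space}) \<Rightarrow> bool" where
  "stokes_setting lam phi \<longleftrightarrow>
     0 < lam 0 \<and> incseq lam \<and> filterlim lam at_top sequentially \<and>
     (\<forall>i j. phi i \<bullet> phi j = (if i = j then 1 else 0)) \<and>
     (\<forall>u. (\<lambda>j. (u \<bullet> phi j) *\<^sub>R phi j) sums u)"

definition in_DA :: "(nat \<Rightarrow> real) \<Rightarrow> (nat \<Rightarrow> 'h::real_inner) \<Rightarrow> real \<Rightarrow> 'h \<Rightarrow> bool" where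
  "in_DA lam phi a u \<longleftrightarrow> summable (\<lambda>j. lam j powr (2 * a) * (u \<bullet> phi j)\<^sup>2)"

definition norm_DA :: "(nat \<Rightarrow> real) \<Rightarrow> (nat \<Rightarrow> 'h::real_inner) \<Rightarrow> real \<Rightarrow> 'h \<Rightarrow> real" where
  "norm_DA lam phi a u = sqrt (\<Sum>j. lam j powr (2 * a) * (u \<bullet> phi j)\<^sup>2)"

definition Pn :: "(nat \<Rightarrow> 'h::real_inner) \<Rightarrow> nat \<Rightarrow> 'h \<Rightarrow> 'h" where
  "Pn phi n u = (\<Sum>j<n. (u \<bullet> phi j) *\<^sub>R phi j)"

definition Qn :: "(nat \<Rightarrow> 'h::real_inner) \<Rightarrow> nat \<Rightarrow> 'h \<Rightarrow> 'h" where
  "Qn phi n u = u - Pn phi n u"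

text \<open>Degenerate expansion v_n \<approx> v + sum_k Gamma_{k,n} w_k in the nested family Z_k
(given by membership predicates Zmem k and norms Znorm k), with remainders wn k n.\<close>
definition degenerate_expansion ::
  "(nat \<Rightarrow> 'h::real_normed_vector \<Rightarrow> bool) \<Rightarrow> (nat \<Rightarrow> 'h \<Rightarrow> real) \<Rightarrow>
   (nat \<Rightarrow> 'h) \<Rightarrow> 'h \<Rightarrow> (nat \<Rightarrow> nat \<Rightarrow> real) \<Rightarrow> (nat \<Rightarrow> 'h) \<Rightarrow> (nat \<Rightarrow> nat \<Rightarrow> 'h) \<Rightarrow> bool" where
  "degenerate_expansion Zmem Znorm vn v \<Gamma> w wn \<longleftrightarrow>
     Zmem 0 v \<and>
     (\<forall>k\<ge>1. Zmem k (w k)) \<and>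
     (\<forall>k\<ge>1. \<forall>n\<ge>1. Zmem (k - 1) (wn k n)) \<and>
     (\<forall>k\<ge>1. \<forall>n\<ge>1. \<Gamma> k n > 0) \<and>
     ((\<lambda>n. \<Gamma> 1 n) \<longlonglongrightarrow> 0) \<and>
     (\<forall>k\<ge>1. (\<lambda>n. \<Gamma> (k + 1) n / \<Gamma> k n) \<longlonglongrightarrow> 0) \<and>
     (\<forall>k\<ge>1. (\<lambda>n. Znorm k (wn k n - w k)) \<longlonglongrightarrow> 0) \<and>
     (\<forall>k\<ge>1. \<forall>n\<ge>1. vn n = v + (\<Sum>j\<in>{1..<k}. \<Gamma> j n *\<^sub>R w j) + \<Gamma> k n *\<^sub>R wn k n) \<and>
     ((\<forall>k\<ge>1. w k = 0) \<or>
      (\<exists>N\<ge>1. (\<forall>k. 1 \<le> k \<and> k \<le> N \<longrightarrow> Znorm k (w k) = 1) \<and> (\<forall>k>N. w k = 0)))"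

end

theory Submission
  imports Defs
begin

text \<open>Since P_n g = g - Q_n g, dividing the tail Q_n g by positive scales gives a degenerate
  expansion whose terms w_k all vanish, as soon as the scales and the normalised tails decay at the
  required rates. Both rates come from one spectral estimate: a vector without modes below n
  satisfies |u|_{D(A^b)} <= lambda_n^(b-a) |u|_{D(A^a)} for b <= a, and lambda_n tends to infinity.
  So |Q_n g|_{D(A^b)} / |Q_n g|_{D(A^a)} tends to 0 for b < a, while |Q_n g|_{D(A^a)}, the root of
  the tail of a convergent series, tends to 0 as well.\<close>

lemma degenerate_expansion_zeroI:
  fixes \<Gamma> :: "nat \<Rightarrow> nat \<Rightarrow> real"
  assumes "Zmem 0 v"
    and "\<And>k. k \<ge> 1 \<Longrightarrow> Zmem k 0"
    and "\<And>k n. k \<ge> 1 \<Longrightarrow> n \<ge> 1 \<Longrightarrow> Zmem (k - 1) (wn k n)"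
    and "\<And>k n. k \<ge> 1 \<Longrightarrow> n \<ge> 1 \<Longrightarrow> \<Gamma> k n > 0"
    and "(\<lambda>n. \<Gamma> 1 n) \<longlonglongrightarrow> 0"
    and "\<And>k. k \<ge> 1 \<Longrightarrow> (\<lambda>n. \<Gamma> (k + 1) n / \<Gamma> k n) \<longlonglongrightarrow> 0"
    and "\<And>k. k \<ge> 1 \<Longrightarrow> (\<lambda>n. Znorm k (wn k n)) \<longlonglongrightarrow> 0"
    and "\<And>k n. k \<ge> 1 \<Longrightarrow> n \<ge> 1 \<Longrightarrow> vn n = v + \<Gamma> k n *\<^sub>R wn k n"
  shows "degenerate_expansion Zmem Znorm vn v \<Gamma> (\<lambda>k. 0) wn"
  unfolding degenerate_expansion_def
proof (intro conjI allI impI disjI1)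
  show "vn n = v + (\<Sum>j\<in>{1..<k}. \<Gamma> j n *\<^sub>R 0) + \<Gamma> k n *\<^sub>R wn k n"
    if "k \<ge> 1" "n \<ge> 1" for k n
    using assms(8)[OF that] by simp
qed (use assms in simp_all)

locale stokes_spectrum =
  fixes lam :: "nat \<Rightarrow> real" and phi :: "nat \<Rightarrow> 'h::{real_inner,complete_space}"
  assumes setting: "stokes_setting lam phi"
begin

lemma lam_mono: "i \<le> j \<Longrightarrow> lam i \<le> lam j"
  using setting unfolding stokes_setting_def incseq_def by blast

lemma lam_pos: "0 < lam j"
  using setting lam_mono[of 0 j] unfolding stokes_setting_def by auto

lemma lam_tendsto_at_top: "filterlim lam at_top sequentially"
  using setting unfolding stokes_setting_def by blast

lemma phi_inner: "phi i \<bullet> phi j = (if i = j then 1 else 0)"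
  using setting unfolding stokes_setting_def by blast

lemma eq_0_if_coeffs_0:
  assumes "\<And>j. u \<bullet> phi j = 0"
  shows "u = 0"
proof -
  have "(\<lambda>j. (u \<bullet> phi j) *\<^sub>R phi j) sums u"
    using setting unfolding stokes_setting_def by blast
  then have "(\<lambda>j. 0) sums u"
    using assms by simp
  then show ?thesis
    using sums_zero sums_unique2 by blast
qed

lemma Pn_coeff: "Pn phi n u \<bullet> phi j = (if j < n then u \<bullet> phi j else 0)"
  unfolding Pn_def by (simp add: inner_sum_left phi_inner if_distrib cong: if_cong)

lemma Qn_coeff: "Qn phi n u \<bullet> phi j = (if j < n then 0 else u \<bullet> phi j)"
  unfolding Qn_def by (simp add: inner_diff_left Pn_coeff)

definition DA_terms :: "real \<Rightarrow> 'h \<Rightarrow> nat \<Rightarrow> real" where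
  "DA_terms a u j = lam j powr (2 * a) * (u \<bullet> phi j)\<^sup>2"

lemma DA_terms_nonneg: "0 \<le> DA_terms a u j"
  unfolding DA_terms_def by simp

lemma in_DA_iff: "in_DA lam phi a u \<longleftrightarrow> summable (DA_terms a u)"
  unfolding in_DA_def DA_terms_def ..

lemma norm_DA_eq: "norm_DA lam phi a u = sqrt (suminf (DA_terms a u))"
  unfolding norm_DA_def DA_terms_def ..

lemma DA_terms_scaleR: "DA_terms a (r *\<^sub>R u) = (\<lambda>j. r\<^sup>2 * DA_terms a u j)"
  unfolding DA_terms_def by (simp add: fun_eq_iff power_mult_distrib)

lemma DA_terms_Qn: "DA_terms a (Qn phi n u) j = (if j < n then 0 else DA_terms a u j)"
  unfolding DA_terms_def by (simp add: Qn_coeff)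

lemma DA_terms_le:
  assumes "b \<le> a" "i \<le> j"
  shows "DA_terms b u j \<le> lam i powr (2 * (b - a)) * DA_terms a u j"
proof -
  have "lam j powr (2 * b) = lam j powr (2 * (b - a)) * lam j powr (2 * a)"
    by (simp add: powr_add[symmetric] algebra_simps)
  also have "\<dots> \<le> lam i powr (2 * (b - a)) * lam j powr (2 * a)"
    using assms lam_pos lam_mono powr_mono2'[of "2 * (b - a)" "lam i" "lam j"]
    by (intro mult_right_mono) auto
  finally show ?thesis
    unfolding DA_terms_def by (simp add: mult.assoc[symmetric] mult_right_mono)
qed

lemma in_DA_mono:
  assumes "b \<le> a" "in_DA lam phi a u"
  shows "in_DA lam phi b u"
  unfolding in_DA_iff
proof (rule summable_comparison_test)
  show "summable (\<lambda>j. lam 0 powr (2 * (b - a)) * DA_terms a u j)"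
    using assms(2) unfolding in_DA_iff by (rule summable_mult)
  show "\<exists>N. \<forall>j\<ge>N. norm (DA_terms b u j) \<le> lam 0 powr (2 * (b - a)) * DA_terms a u j"
    using DA_terms_le[OF assms(1)] DA_terms_nonneg by auto
qed

lemma in_DA_scaleR: "in_DA lam phi a u \<Longrightarrow> in_DA lam phi a (r *\<^sub>R u)"
  unfolding in_DA_iff DA_terms_scaleR by (rule summable_mult)

lemma in_DA_Qn:
  assumes "in_DA lam phi a u"
  shows "in_DA lam phi a (Qn phi n u)"
  unfolding in_DA_iff
  by (rule summable_comparison_test[OF _ assms[unfolded in_DA_iff]])
    (auto simp: DA_terms_Qn DA_terms_nonneg)

lemma norm_DA_scaleR:
  assumes "in_DA lam phi a u"
  shows "norm_DA lam phi a (r *\<^sub>R u) = \<bar>r\<bar> * norm_DA lam phi a u"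
  using suminf_mult[OF assms[unfolded in_DA_iff], of "r\<^sup>2"]
  by (simp add: norm_DA_eq DA_terms_scaleR real_sqrt_mult)

lemma norm_DA_nonneg: "in_DA lam phi a u \<Longrightarrow> 0 \<le> norm_DA lam phi a u"
  unfolding in_DA_iff norm_DA_eq by (simp add: suminf_nonneg DA_terms_nonneg)

lemma norm_DA_uminus: "norm_DA lam phi a (- u) = norm_DA lam phi a u"
  unfolding norm_DA_def by simp

lemma norm_DA_pos:
  assumes "in_DA lam phi a u" "u \<noteq> 0"
  shows "0 < norm_DA lam phi a u"
proof -
  obtain j where "u \<bullet> phi j \<noteq> 0"
    using eq_0_if_coeffs_0 assms(2) by blast
  then have "0 < DA_terms a u j"
    unfolding DA_terms_def using lam_pos[of j] by simp
  then have "0 < suminf (DA_terms a u)"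
    using assms(1) DA_terms_nonneg unfolding in_DA_iff by (intro suminf_pos2) auto
  then show ?thesis
    unfolding norm_DA_eq by simp
qed

lemma norm_DA_normalize:
  assumes "in_DA lam phi a u" "u \<noteq> 0"
  shows "norm_DA lam phi a (- (1 / norm_DA lam phi a u) *\<^sub>R u) = 1"
  using norm_DA_pos[OF assms] by (simp add: norm_DA_uminus norm_DA_scaleR[OF assms(1)])

lemma norm_DA_Qn_tendsto_0:
  assumes "in_DA lam phi a u"
  shows "(\<lambda>n. norm_DA lam phi a (Qn phi n u)) \<longlonglongrightarrow> 0"
proof -
  have tail: "suminf (DA_terms a (Qn phi n u)) = (\<Sum>k. DA_terms a u (k + n))" for n
    using suminf_split_initial_segment[OF assms[THEN in_DA_Qn, unfolded in_DA_iff], of n n]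
    by (simp add: DA_terms_Qn)
  show ?thesis
    using tendsto_real_sqrt[OF suminf_exist_split2[OF assms[unfolded in_DA_iff]]]
    by (simp add: norm_DA_eq tail)
qed

lemma norm_DA_high_modes_le:
  assumes "b \<le> a" "in_DA lam phi a u" and low: "\<And>j. j < n \<Longrightarrow> u \<bullet> phi j = 0"
  shows "norm_DA lam phi b u \<le> lam n powr (b - a) * norm_DA lam phi a u"
proof -
  have "DA_terms b u j \<le> lam n powr (2 * (b - a)) * DA_terms a u j" for j
    using DA_terms_le[OF assms(1), of n j] low[of j] by (cases "j < n") (auto simp: DA_terms_def)
  then have "suminf (DA_terms b u) \<le> suminf (\<lambda>j. lam n powr (2 * (b - a)) * DA_terms a u j)"
    using assms(1,2) in_DA_mono summable_mult unfolding in_DA_iff by (intro suminf_le) blast+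
  also have "\<dots> = (lam n powr (b - a))\<^sup>2 * suminf (DA_terms a u)"
    using assms(2) unfolding in_DA_iff
    by (simp add: suminf_mult powr_add[symmetric] power2_eq_square)
  finally show ?thesis
    unfolding norm_DA_eq using real_sqrt_le_mono by (fastforce simp: real_sqrt_mult)
qed

lemma norm_DA_Qn_ratio_tendsto_0:
  assumes "b < a" "in_DA lam phi a u"
  shows "(\<lambda>n. norm_DA lam phi b (Qn phi n u) / norm_DA lam phi a (Qn phi n u)) \<longlonglongrightarrow> 0"
proof (rule tendsto_sandwich[OF _ _ tendsto_const])
  show "(\<lambda>n. lam n powr (b - a)) \<longlonglongrightarrow> 0"
    using assms(1) lam_tendsto_at_top by (intro tendsto_neg_powr) auto
  show "\<forall>\<^sub>F n in sequentially. 0 \<le> norm_DA lam phi b (Qn phi n u) / norm_DA lam phi a (Qn phi n u)"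
    using assms in_DA_mono in_DA_Qn norm_DA_nonneg
    by (intro always_eventually allI divide_nonneg_nonneg) (meson less_imp_le)+
  have "norm_DA lam phi b (Qn phi n u) / norm_DA lam phi a (Qn phi n u) \<le> lam n powr (b - a)" for n
  proof -
    have Qa: "in_DA lam phi a (Qn phi n u)"
      using in_DA_Qn[OF assms(2)] .
    have "norm_DA lam phi b (Qn phi n u) \<le> lam n powr (b - a) * norm_DA lam phi a (Qn phi n u)"
      using norm_DA_high_modes_le[OF less_imp_le[OF assms(1)] Qa] by (simp add: Qn_coeff)
    then show ?thesis
      using norm_DA_nonneg[OF Qa]
      by (cases "norm_DA lam phi a (Qn phi n u) = 0") (auto simp: pos_divide_le_eq mult.commute)
  qed
  then show "\<forall>\<^sub>F n in sequentially.
      norm_DA lam phi b (Qn phi n u) / norm_DA lam phi a (Qn phi n u) \<le> lam n powr (b - a)"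
    by simp
qed

lemma degenerate_expansion_Pn:
  assumes g: "in_DA lam phi a0 g" and Qg_nz: "\<And>n. n \<ge> 1 \<Longrightarrow> Qn phi n g \<noteq> 0"
    and \<beta>_le: "\<And>k. \<beta> k \<le> a0" and \<gamma>0_le: "\<gamma> 0 \<le> a0"
    and \<beta>_dec: "\<And>k. k \<ge> 1 \<Longrightarrow> \<beta> (k + 1) < \<beta> k"
    and \<gamma>_less_\<beta>: "\<And>k. k \<ge> 1 \<Longrightarrow> \<gamma> k < \<beta> k"
    and \<gamma>_pred_le_\<beta>: "\<And>k. k \<ge> 1 \<Longrightarrow> \<gamma> (k - 1) \<le> \<beta> k"
  shows "degenerate_expansion (\<lambda>k. in_DA lam phi (\<gamma> k)) (\<lambda>k. norm_DA lam phi (\<gamma> k))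
           (\<lambda>n. Pn phi n g) g
           (\<lambda>k n. norm_DA lam phi (\<beta> k) (Qn phi n g))
           (\<lambda>k. 0)
           (\<lambda>k n. - (1 / norm_DA lam phi (\<beta> k) (Qn phi n g)) *\<^sub>R Qn phi n g)"
proof (rule degenerate_expansion_zeroI)
  have g\<beta>: "in_DA lam phi (\<beta> k) g" for k
    using in_DA_mono[OF \<beta>_le g] .
  have Qg\<beta>: "in_DA lam phi (\<beta> k) (Qn phi n g)" for k n
    using in_DA_Qn[OF g\<beta>] .
  have \<Gamma>_pos: "0 < norm_DA lam phi (\<beta> k) (Qn phi n g)" if "n \<ge> 1" for k n
    using norm_DA_pos[OF Qg\<beta> Qg_nz[OF that]] .
  show "in_DA lam phi (\<gamma> 0) g"
    using in_DA_mono[OF \<gamma>0_le g] .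
  show "in_DA lam phi (\<gamma> k) 0" for k
    unfolding in_DA_def by simp
  show "in_DA lam phi (\<gamma> (k - 1)) (- (1 / norm_DA lam phi (\<beta> k) (Qn phi n g)) *\<^sub>R Qn phi n g)"
    if "k \<ge> 1" for k n
    using in_DA_mono[OF \<gamma>_pred_le_\<beta>[OF that] in_DA_scaleR[OF Qg\<beta>]] .
  show "0 < norm_DA lam phi (\<beta> k) (Qn phi n g)" if "n \<ge> 1" for k n
    using \<Gamma>_pos[OF that] .
  show "(\<lambda>n. norm_DA lam phi (\<beta> 1) (Qn phi n g)) \<longlonglongrightarrow> 0"
    using norm_DA_Qn_tendsto_0[OF g\<beta>] .
  show "(\<lambda>n. norm_DA lam phi (\<beta> (k + 1)) (Qn phi n g) / norm_DA lam phi (\<beta> k) (Qn phi n g))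
          \<longlonglongrightarrow> 0" if "k \<ge> 1" for k
    using norm_DA_Qn_ratio_tendsto_0[OF \<beta>_dec[OF that] g\<beta>] .
  show "(\<lambda>n. norm_DA lam phi (\<gamma> k) (- (1 / norm_DA lam phi (\<beta> k) (Qn phi n g)) *\<^sub>R Qn phi n g))
          \<longlonglongrightarrow> 0" if "k \<ge> 1" for k
    using norm_DA_Qn_ratio_tendsto_0[OF \<gamma>_less_\<beta>[OF that] g\<beta>]
    by (simp add: norm_DA_uminus norm_DA_nonneg[OF Qg\<beta>]
        norm_DA_scaleR[OF in_DA_mono[OF less_imp_le[OF \<gamma>_less_\<beta>[OF that]] Qg\<beta>]])
  show "Pn phi n g = g + norm_DA lam phi (\<beta> k) (Qn phi n g) *\<^sub>R
          (- (1 / norm_DA lam phi (\<beta> k) (Qn phi n g)) *\<^sub>R Qn phi n g)" if "n \<ge> 1" for k n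
    using \<Gamma>_pos[OF that, of k] by (simp add: Qn_def)
qed

end

theorem mainTheorem5:
  fixes lam :: "nat \<Rightarrow> real" and phi :: "nat \<Rightarrow> 'h::{real_inner,complete_space}"
    and \<alpha> :: "nat \<Rightarrow> real" and g :: 'h
  assumes setting: "stokes_setting lam phi"
    and alpha_pos: "\<And>k. \<alpha> k > 0"
    and alpha_dec: "\<And>k. \<alpha> (Suc k) < \<alpha> k"
    and g_dom: "in_DA lam phi (\<alpha> 0) g"
    and Qg_nz: "\<And>n. n \<ge> 1 \<Longrightarrow> Qn phi n g \<noteq> 0"
  shows
    "degenerate_expansion (\<lambda>k. in_DA lam phi (\<alpha> k)) (\<lambda>k. norm_DA lam phi (\<alpha> k))
        (\<lambda>n. Pn phi n g) g
        (\<lambda>k n. norm_DA lam phi (\<alpha> (k - 1)) (Qn phi n g))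
        (\<lambda>k. 0)
        (\<lambda>k n. - (1 / norm_DA lam phi (\<alpha> (k - 1)) (Qn phi n g)) *\<^sub>R Qn phi n g)
     \<and> (\<forall>k\<ge>1. \<forall>n\<ge>1. norm_DA lam phi (\<alpha> (k - 1))
            (- (1 / norm_DA lam phi (\<alpha> (k - 1)) (Qn phi n g)) *\<^sub>R Qn phi n g) = 1)
     \<and> (\<forall>s. 0 \<le> s \<and> s \<le> (INF k. \<alpha> k) \<longrightarrow>
          degenerate_expansion (\<lambda>k. in_DA lam phi s) (\<lambda>k. norm_DA lam phi s)
            (\<lambda>n. Pn phi n g) g
            (\<lambda>k n. norm_DA lam phi (\<alpha> k) (Qn phi n g))
            (\<lambda>k. 0)
            (\<lambda>k n. - (1 / norm_DA lam phi (\<alpha> k) (Qn phi n g)) *\<^sub>R Qn phi n g))"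
proof (intro conjI allI impI)
  interpret stokes_spectrum lam phi
    using setting by unfold_locales
  have "decseq \<alpha>"
    by (intro decseq_SucI less_imp_le alpha_dec)
  then have alpha_le: "\<alpha> k \<le> \<alpha> 0" for k
    by (simp add: decseqD)
  have alpha_less_pred: "\<alpha> k < \<alpha> (k - 1)" if "k \<ge> 1" for k
    using alpha_dec[of "k - 1"] that by simp
  show "degenerate_expansion (\<lambda>k. in_DA lam phi (\<alpha> k)) (\<lambda>k. norm_DA lam phi (\<alpha> k))
        (\<lambda>n. Pn phi n g) g (\<lambda>k n. norm_DA lam phi (\<alpha> (k - 1)) (Qn phi n g)) (\<lambda>k. 0)
        (\<lambda>k n. - (1 / norm_DA lam phi (\<alpha> (k - 1)) (Qn phi n g)) *\<^sub>R Qn phi n g)"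
    using alpha_less_pred by (intro degenerate_expansion_Pn[OF g_dom Qg_nz alpha_le]) auto
  show "norm_DA lam phi (\<alpha> (k - 1)) (- (1 / norm_DA lam phi (\<alpha> (k - 1)) (Qn phi n g)) *\<^sub>R Qn phi n g)
      = 1" if "n \<ge> 1" for k n
    using norm_DA_normalize[OF in_DA_Qn[OF in_DA_mono[OF alpha_le g_dom]] Qg_nz[OF that]] .
  fix s assume s: "0 \<le> s \<and> s \<le> (INF k. \<alpha> k)"
  have "s < \<alpha> k" for k
    using s cINF_lower[of \<alpha> UNIV "Suc k"] alpha_dec[of k] alpha_pos
    by (fastforce intro: bdd_belowI2[of _ 0] less_imp_le)
  then show "degenerate_expansion (\<lambda>k. in_DA lam phi s) (\<lambda>k. norm_DA lam phi s)
      (\<lambda>n. Pn phi n g) g (\<lambda>k n. norm_DA lam phi (\<alpha> k) (Qn phi n g)) (\<lambda>k. 0)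
      (\<lambda>k n. - (1 / norm_DA lam phi (\<alpha> k) (Qn phi n g)) *\<^sub>R Qn phi n g)"
    using alpha_dec less_imp_le
    by (intro degenerate_expansion_Pn[OF g_dom Qg_nz alpha_le, where \<gamma> = "\<lambda>_. s"]) auto
qed

end
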